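(* Let $\mathcal{X}$ be an arbitrary (unknown) distribution over passwords and let $pwd^1,\ldots,pwd^N$ be $N$ independent samples from $\mathcal{X}$ (the users' passwords). Let $pwd_1,pwd_2,\ldots$ be the distinct passwords appearing in the sample, with $f_i$ the number of samples equal to $pwd_i$, sorted so that $f_i\ge f_{i+1}$. Let $k>0$ be the cost of one password guess, $V>0$ the value of a cracked password, $L>0$, and $j\ge 1$ an integer. If $\frac{V}{k}\ge NL$ and $a=1$, then a rational adversary will crack at least \[ \sum_{i: f_i\geq j} f_i - \frac{N}{(j-1)!\,L^{j-1}} \] of the $N$ user passwords, in expectation (over the draw of the $N$ samples).
   Context: Attacker model: an offline attacker who knows the true distribution $\mathcal{X}$ (but not which password a given user chose) guesses passwords in decreasing order of true probability $q_1\ge q_2\ge\cdots$, each guess costing $k$. For threshold $t$ (guessing the $t$ most likely passwords) the expected reward is $R(t)=V\,(\sum_{m=1}^t q_m)^a$ with $a=1$ here (no diminishing returns), and the marginal cost of the $t$-th guess is $MC(t)=k(1-\sum_{m=1}^{t-1}q_m)$; the marginal revenue is $MR(t)=V q_t$. A rational adversary continues guessing as long as marginal revenue is at least marginal cost and stops otherwise. A user password is cracked if it is among the attacker's guesses. *)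

theory Defs
  imports "HOL-Probability.Probability" "HOL-Probability.Product_PMF"
begin

text \<open>Attacker model with a = 1. The guessing order is g :: nat => 'a (0-indexed):
  g 0 is the first guess, g t the (t+1)-th guess, with q_(t+1) = pmf p (g t).\<close>

definition marginal_revenue :: "real \<Rightarrow> 'a pmf \<Rightarrow> (nat \<Rightarrow> 'a) \<Rightarrow> nat \<Rightarrow> real" where
  "marginal_revenue V p g t = V * pmf p (g t)"

definition marginal_cost :: "real \<Rightarrow> 'a pmf \<Rightarrow> (nat \<Rightarrow> 'a) \<Rightarrow> nat \<Rightarrow> real" where
  "marginal_cost k p g t = k * (1 - (\<Sum>m<t. pmf p (g m)))"

definition adversary_guesses :: "real \<Rightarrow> real \<Rightarrow> 'a pmf \<Rightarrow> (nat \<Rightarrow> 'a) \<Rightarrow> 'a set" where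
  "adversary_guesses V k p g =
     {g t | t. \<forall>s\<le>t. marginal_revenue V p g s \<ge> marginal_cost k p g s}"

definition num_cracked :: "real \<Rightarrow> real \<Rightarrow> 'a pmf \<Rightarrow> (nat \<Rightarrow> 'a) \<Rightarrow> nat \<Rightarrow> (nat \<Rightarrow> 'a) \<Rightarrow> nat" where
  "num_cracked V k p g N \<omega> = card {n\<in>{..<N}. \<omega> n \<in> adversary_guesses V k p g}"

definition freq :: "nat \<Rightarrow> (nat \<Rightarrow> 'a) \<Rightarrow> 'a \<Rightarrow> nat" where
  "freq N \<omega> x = card {n\<in>{..<N}. \<omega> n = x}"

definition heavy_sum :: "nat \<Rightarrow> nat \<Rightarrow> (nat \<Rightarrow> 'a) \<Rightarrow> nat" where
  "heavy_sum N j \<omega> = (\<Sum>x\<in>{x \<in> \<omega> ` {..<N}. freq N \<omega> x \<ge> j}. freq N \<omega> x)"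

definition sample_pmf :: "nat \<Rightarrow> 'a pmf \<Rightarrow> (nat \<Rightarrow> 'a) pmf" where
  "sample_pmf N p = Pi_pmf {..<N} undefined (\<lambda>_. p)"

end

theory Submission
  imports Defs
begin

text \<open>A password of probability \<open>q \<ge> 1 / (N L)\<close> is always guessed: its marginal
  revenue \<open>V q \<ge> k\<close> bounds every marginal cost, and every password guessed before it is
  at least as likely. So a sample counted in the heavy sum but not cracked has
  \<open>q < 1 / (N L)\<close> and is repeated by some \<open>j - 1\<close> of the other \<open>N - 1\<close> samples.
  A union bound over these choices bounds the probability of this by
  \<open>((N - 1) choose (j - 1)) / (N L) ^ (j - 1) \<le> 1 / ((j - 1)! L ^ (j - 1))\<close>,
  and summing over the \<open>N\<close> samples gives the loss term.\<close>

lemma binomial_le_pow_div_fact: "real (n choose k) \<le> real n ^ k / fact k"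
proof -
  have "real (n choose k) * fact k \<le> real n ^ k"
    by (metis binomial_fact_pow of_nat_fact of_nat_le_iff of_nat_mult of_nat_power)
  then show ?thesis
    by (simp add: field_simps)
qed

lemma expectation_card_filter:
  fixes M :: "'a pmf"
  assumes "finite I"
  shows "measure_pmf.expectation M (\<lambda>\<omega>. real (card {i\<in>I. P i \<omega>}))
           = (\<Sum>i\<in>I. measure_pmf.prob M {\<omega>. P i \<omega>})"
proof -
  have "real (card {i\<in>I. P i \<omega>}) = (\<Sum>i\<in>I. indicator {\<omega>. P i \<omega>} \<omega>)" for \<omega>
    using assms by (simp add: indicator_def sum.If_cases Int_def conj_commute)
  then show ?thesis
    by (simp add: Bochner_Integration.integral_sum measure_pmf.integrable_const_bound[where B = 1])
qed

lemma prob_Pi_pmf_light_and_repeated: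
  fixes p :: "'a pmf"
  assumes "finite A" "n \<in> A" "S \<subseteq> A - {n}" "0 \<le> \<tau>"
  shows "measure_pmf.prob (Pi_pmf A dflt (\<lambda>_. p)) {\<omega>. pmf p (\<omega> n) < \<tau> \<and> (\<forall>m\<in>S. \<omega> m = \<omega> n)}
           \<le> \<tau> ^ card S"
proof -
  define B where "B = A - {n}"
  define Q where "Q = Pi_pmf B dflt (\<lambda>_. p)"
  define E where "E = {\<omega>. pmf p (\<omega> n) < \<tau> \<and> (\<forall>m\<in>S. \<omega> m = \<omega> n)}"
  have B: "finite B" "n \<notin> B" "S \<subseteq> B" using assms by (auto simp: B_def)
  \<comment> \<open>condition on the \<open>n\<close>-th coordinate\<close>
  have "Pi_pmf A dflt (\<lambda>_. p) = do {y \<leftarrow> p; f \<leftarrow> Q; return_pmf (f(n := y))}"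
    using Pi_pmf_insert'[OF B(1,2)] assms(2) by (simp add: Q_def B_def insert_absorb)
  then have split: "emeasure (Pi_pmf A dflt (\<lambda>_. p)) E = (\<integral>\<^sup>+y. emeasure Q ((\<lambda>f. f(n := y)) -` E) \<partial>p)"
    by (simp add: map_pmf_def[symmetric])
  have fibre: "emeasure Q ((\<lambda>f. f(n := y)) -` E) \<le> ennreal (\<tau> ^ card S)" for y
  proof (cases "pmf p y < \<tau>")
    case True
    have "(\<lambda>f. f(n := y)) -` E = Pi B (\<lambda>m. if m \<in> S then {y} else UNIV)"
      using True B by (auto simp: E_def Pi_def)
    moreover have "measure_pmf.prob Q (Pi B (\<lambda>m. if m \<in> S then {y} else UNIV))
        = (\<Prod>m\<in>B. if m \<in> S then pmf p y else 1)"
      using B by (simp add: Q_def measure_Pi_pmf_Pi measure_pmf_single if_distrib cong: if_cong)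
    moreover have "(\<Prod>m\<in>B. if m \<in> S then pmf p y else 1) = pmf p y ^ card S"
      using B by (simp add: prod.If_cases Int_absorb1)
    moreover have "pmf p y ^ card S \<le> \<tau> ^ card S"
      using True by (intro power_mono) auto
    ultimately show ?thesis
      by (simp add: measure_pmf.emeasure_eq_measure ennreal_leI)
  next
    case False
    then have "(\<lambda>f. f(n := y)) -` E = {}" by (auto simp: E_def)
    then show ?thesis by simp
  qed
  have "emeasure (Pi_pmf A dflt (\<lambda>_. p)) E \<le> (\<integral>\<^sup>+y. ennreal (\<tau> ^ card S) \<partial>p)"
    unfolding split by (intro nn_integral_mono fibre)
  then show ?thesis
    unfolding E_def[symmetric] using assms(4) by (simp add: measure_pmf.emeasure_eq_measure)
qed

lemma heavy_sum_eq_card: "heavy_sum N j \<omega> = card {n\<in>{..<N}. j \<le> freq N \<omega> (\<omega> n)}"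
proof -
  define X where "X = {x \<in> \<omega> ` {..<N}. j \<le> freq N \<omega> x}"
  have "{n\<in>{..<N}. j \<le> freq N \<omega> (\<omega> n)} = (\<Union>x\<in>X. {n\<in>{..<N}. \<omega> n = x})"
    by (auto simp: X_def)
  moreover have "card (\<Union>x\<in>X. {n\<in>{..<N}. \<omega> n = x}) = (\<Sum>x\<in>X. card {n\<in>{..<N}. \<omega> n = x})"
    by (rule card_UN_disjoint) (auto simp: X_def)
  ultimately show ?thesis
    by (simp add: heavy_sum_def freq_def X_def)
qed

lemma prob_frequent_and_light:
  fixes p :: "'a pmf"
  assumes "n < N" "0 \<le> \<tau>"
  shows "measure_pmf.prob (sample_pmf N p) {\<omega>. j \<le> freq N \<omega> (\<omega> n) \<and> pmf p (\<omega> n) < \<tau>}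
           \<le> real ((N - 1) choose (j - 1)) * \<tau> ^ (j - 1)"
proof -
  define B where "B = {..<N} - {n}"
  define Ss where "Ss = {S. S \<subseteq> B \<and> card S = j - 1}"
  define F where "F S = {\<omega>. pmf p (\<omega> n) < \<tau> \<and> (\<forall>m\<in>S. \<omega> m = \<omega> n)}" for S
  have "finite B" "card B = N - 1" using assms(1) by (auto simp: B_def)
  then have Ss: "finite Ss" "card Ss = (N - 1) choose (j - 1)"
    by (simp_all add: Ss_def n_subsets)
  have "{\<omega>. j \<le> freq N \<omega> (\<omega> n) \<and> pmf p (\<omega> n) < \<tau>} \<subseteq> (\<Union>S\<in>Ss. F S)"
  proof safe
    fix \<omega> assume freq: "j \<le> freq N \<omega> (\<omega> n)" and light: "pmf p (\<omega> n) < \<tau>"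
    define C where "C = {m\<in>{..<N}. \<omega> m = \<omega> n} - {n}"
    have "j - 1 \<le> card C"
      using freq assms(1) by (simp add: C_def freq_def card_Diff_singleton)
    then obtain S where "S \<subseteq> C" "card S = j - 1"
      by (meson obtain_subset_with_card_n)
    then have "S \<in> Ss" "\<omega> \<in> F S"
      using light by (auto simp: Ss_def C_def B_def F_def)
    then show "\<omega> \<in> (\<Union>S\<in>Ss. F S)" by blast
  qed
  then have "measure_pmf.prob (sample_pmf N p) {\<omega>. j \<le> freq N \<omega> (\<omega> n) \<and> pmf p (\<omega> n) < \<tau>}
        \<le> measure_pmf.prob (sample_pmf N p) (\<Union>S\<in>Ss. F S)"
    by (intro measure_pmf.finite_measure_mono) simp_all
  also have "\<dots> \<le> (\<Sum>S\<in>Ss. measure_pmf.prob (sample_pmf N p) (F S))"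
    using Ss(1) by (intro measure_pmf.finite_measure_subadditive_finite) simp_all
  also have "\<dots> \<le> (\<Sum>S\<in>Ss. \<tau> ^ (j - 1))"
    using assms unfolding sample_pmf_def F_def
    by (intro sum_mono order.trans[OF prob_Pi_pmf_light_and_repeated]) (auto simp: Ss_def B_def)
  finally show ?thesis
    using Ss by simp
qed

lemma prob_frequent_below_threshold:
  fixes p :: "'a pmf"
  assumes "n < N" "L > 0"
  shows "measure_pmf.prob (sample_pmf N p) {\<omega>. j \<le> freq N \<omega> (\<omega> n) \<and> pmf p (\<omega> n) < 1 / (real N * L)}
           \<le> 1 / (fact (j - 1) * L ^ (j - 1))"
proof -
  have N: "real N > 0" using assms(1) by simp
  have "real ((N - 1) choose (j - 1)) \<le> real (N - 1) ^ (j - 1) / fact (j - 1)"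
    by (rule binomial_le_pow_div_fact)
  also have "\<dots> \<le> real N ^ (j - 1) / fact (j - 1)"
    by (intro divide_right_mono power_mono) auto
  finally have "real ((N - 1) choose (j - 1)) * (1 / (real N * L)) ^ (j - 1)
      \<le> real N ^ (j - 1) / fact (j - 1) * (1 / (real N * L)) ^ (j - 1)"
    by (intro mult_right_mono) (use assms(2) in simp_all)
  also have "\<dots> = 1 / (fact (j - 1) * L ^ (j - 1))"
    using N assms(2) by (simp add: power_divide power_mult_distrib)
  finally show ?thesis
    using prob_frequent_and_light[OF assms(1), of "1 / (real N * L)" p j] assms(2) by simp
qed

lemma mem_adversary_guesses_if_cost_le_revenue:
  assumes "set_pmf p \<subseteq> range g"
    and "\<And>s t. s \<le> t \<Longrightarrow> pmf p (g t) \<le> pmf p (g s)"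
    and "0 < k" "k \<le> V * pmf p x"
  shows "x \<in> adversary_guesses V k p g"
proof -
  have "0 < V * pmf p x" using assms(3,4) by linarith
  then have "V > 0" "x \<in> set_pmf p"
    by (auto simp: set_pmf_eq zero_less_mult_iff)
  then obtain t where t: "x = g t" using assms(1) by blast
  have "marginal_cost k p g s \<le> marginal_revenue V p g s" if "s \<le> t" for s
  proof -
    have "marginal_cost k p g s \<le> k"
      using assms(3) by (simp add: marginal_cost_def sum_nonneg)
    also have "\<dots> \<le> V * pmf p (g t)" using assms(4) t by simp
    also have "\<dots> \<le> V * pmf p (g s)" using assms(2)[OF that] \<open>V > 0\<close> by simp
    finally show ?thesis by (simp add: marginal_revenue_def)
  qed
  then show ?thesis
    unfolding adversary_guesses_def using t by blast
qed

lemma prob_frequent_le_prob_cracked: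
  assumes order_covers: "set_pmf p \<subseteq> range g"
    and order_decr: "\<And>s t. s \<le> t \<Longrightarrow> pmf p (g t) \<le> pmf p (g s)"
    and k_pos: "k > 0" and L_pos: "L > 0" and ratio: "V / k \<ge> real N * L" and n_less: "n < N"
  shows "measure_pmf.prob (sample_pmf N p) {\<omega>. j \<le> freq N \<omega> (\<omega> n)}
           \<le> measure_pmf.prob (sample_pmf N p) {\<omega>. \<omega> n \<in> adversary_guesses V k p g}
             + 1 / (fact (j - 1) * L ^ (j - 1))"
proof -
  define M where "M = sample_pmf N p"
  define \<tau> where "\<tau> = 1 / (real N * L)"
  have NL: "real N * L > 0" using L_pos n_less by simp
  have V_ge: "k * (real N * L) \<le> V" using k_pos ratio by (simp add: field_simps)
  moreover have "0 < k * (real N * L)" using NL k_pos by simp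
  ultimately have "0 < V" by linarith
  have cracked: "x \<in> adversary_guesses V k p g" if "\<tau> \<le> pmf p x" for x
  proof (rule mem_adversary_guesses_if_cost_le_revenue[OF order_covers order_decr k_pos])
    have "k * (real N * L) * \<tau> \<le> V * pmf p x"
      using that V_ge NL \<open>0 < V\<close> by (intro mult_mono) (simp_all add: \<tau>_def)
    then show "k \<le> V * pmf p x"
      using NL by (simp add: \<tau>_def zero_less_mult_iff)
  qed
  have "{\<omega>. j \<le> freq N \<omega> (\<omega> n)}
      \<subseteq> {\<omega>. \<omega> n \<in> adversary_guesses V k p g} \<union> {\<omega>. j \<le> freq N \<omega> (\<omega> n) \<and> pmf p (\<omega> n) < \<tau>}"
    using cracked by (auto intro: linorder_not_le[THEN iffD1])
  then have "measure_pmf.prob M {\<omega>. j \<le> freq N \<omega> (\<omega> n)}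
      \<le> measure_pmf.prob M {\<omega>. \<omega> n \<in> adversary_guesses V k p g}
        + measure_pmf.prob M {\<omega>. j \<le> freq N \<omega> (\<omega> n) \<and> pmf p (\<omega> n) < \<tau>}"
    by (intro order.trans[OF measure_pmf.finite_measure_mono measure_subadditive]) simp_all
  also have "\<dots> \<le> measure_pmf.prob M {\<omega>. \<omega> n \<in> adversary_guesses V k p g}
      + 1 / (fact (j - 1) * L ^ (j - 1))"
    using prob_frequent_below_threshold[OF n_less L_pos] by (simp add: M_def \<tau>_def)
  finally show ?thesis
    unfolding M_def .
qed

theorem theorem2:
  fixes p :: "'a pmf" and g :: "nat \<Rightarrow> 'a"
    and N j :: nat and k V L :: real
  assumes order_inj: "inj g"
    and order_covers: "set_pmf p \<subseteq> range g"
    and order_decr: "\<And>s t. s \<le> t \<Longrightarrow> pmf p (g t) \<le> pmf p (g s)"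
    and k_pos: "k > 0" and V_pos: "V > 0" and L_pos: "L > 0"
    and j_ge: "j \<ge> 1"
    and ratio: "V / k \<ge> real N * L"
  shows "measure_pmf.expectation (sample_pmf N p) (\<lambda>\<omega>. real (num_cracked V k p g N \<omega>))
         \<ge> measure_pmf.expectation (sample_pmf N p) (\<lambda>\<omega>. real (heavy_sum N j \<omega>))
           - real N / (fact (j - 1) * L ^ (j - 1))"
proof -
  define M where "M = sample_pmf N p"
  define \<rho> where "\<rho> = 1 / (fact (j - 1) * L ^ (j - 1))"
  have "(\<Sum>n<N. measure_pmf.prob M {\<omega>. j \<le> freq N \<omega> (\<omega> n)})
      \<le> (\<Sum>n<N. measure_pmf.prob M {\<omega>. \<omega> n \<in> adversary_guesses V k p g} + \<rho>)"
    using prob_frequent_le_prob_cracked[OF order_covers order_decr k_pos L_pos ratio]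
    by (intro sum_mono) (simp add: M_def \<rho>_def)
  also have "\<dots> = (\<Sum>n<N. measure_pmf.prob M {\<omega>. \<omega> n \<in> adversary_guesses V k p g}) + real N * \<rho>"
    by (simp add: sum.distrib)
  finally show ?thesis
    unfolding heavy_sum_eq_card num_cracked_def expectation_card_filter[OF finite_lessThan]
    by (simp add: M_def \<rho>_def)
qed

end
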